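(* Let $M$ be the 5-dimensional manifold of plane triangles $(w_1,w_2,w_3)$ of oriented area $3/2$. For such a triangle let $c=(w_1+w_2+w_3)/3$, $u=w_1-c$, $v=w_2-c$ (so $[u,v]=1$). Then the map $(w_1,w_2,w_3)\mapsto((u,v),c)$ is a $\mathbb Z_3$-equivariant diffeomorphism $M\to SL(2,\mathbb R)\times\mathbb R^2$. Moreover, the fibers of the projection $SL(2,\mathbb R)\times\mathbb R^2\to SL(2,\mathbb R)$ are transverse to the distribution $\mathcal F$ on $M$.
   Context: $[\cdot,\cdot]$ is the determinant of two plane vectors; a pair $(u,v)$ with $[u,v]=1$ is viewed as an element of $SL(2,\mathbb R)$. $\mathbb Z_3$ acts on $M$ by the cyclic permutation $\sigma(w_1,w_2,w_3)=(w_2,w_3,w_1)$, on $SL(2,\mathbb R)$ by $T(u,v)=(v,-u-v)$, and on $SL(2,\mathbb R)\times\mathbb R^2$ by $T$ on the first factor and trivially on the second. $\mathcal F$ is the 3-dimensional distribution on $M$ defined by: a tangent vector (velocities of $w_1,w_2,w_3$) lies in $\mathcal F$ iff the velocity of $w_i$ is parallel to the line $w_{i+1}w_{i+2}$ for $i=1,2,3$ (indices mod 3). *)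

theory Defs
  imports "HOL-Analysis.Analysis"
begin

type_synonym pt = "real \<times> real"
type_synonym triangle = "pt \<times> pt \<times> pt"

definition det2 :: "pt \<Rightarrow> pt \<Rightarrow> real" where
  "det2 x y = fst x * snd y - snd x * fst y"

definition Mtri :: "triangle set" where
  "Mtri = {(w1, w2, w3). det2 (w2 - w1) (w3 - w1) / 2 = 3 / 2}"

definition SL2 :: "(pt \<times> pt) set" where
  "SL2 = {(u, v). det2 u v = 1}"

definition SL2R2 :: "((pt \<times> pt) \<times> pt) set" where
  "SL2R2 = SL2 \<times> UNIV"

definition Phi :: "triangle \<Rightarrow> (pt \<times> pt) \<times> pt" where
  "Phi w = (case w of (w1, w2, w3) \<Rightarrow>
     (let c = (1/3) *\<^sub>R (w1 + w2 + w3) in ((w1 - c, w2 - c), c)))"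

definition sigma :: "triangle \<Rightarrow> triangle" where
  "sigma w = (case w of (w1, w2, w3) \<Rightarrow> (w2, w3, w1))"

definition Tsl :: "pt \<times> pt \<Rightarrow> pt \<times> pt" where
  "Tsl p = (case p of (u, v) \<Rightarrow> (v, - u - v))"

definition Tprod :: "(pt \<times> pt) \<times> pt \<Rightarrow> (pt \<times> pt) \<times> pt" where
  "Tprod p = (Tsl (fst p), snd p)"

fun Cn :: "nat \<Rightarrow> 'a::euclidean_space set \<Rightarrow> ('a \<Rightarrow> 'b::real_normed_vector) \<Rightarrow> bool" where
  "Cn 0 U f = continuous_on U f"
| "Cn (Suc n) U f = (continuous_on U f \<and> (\<forall>x\<in>U. f differentiable (at x)) \<and>
      (\<forall>v. Cn n U (\<lambda>x. frechet_derivative f (at x) v)))"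

definition smooth_on :: "'a::euclidean_space set \<Rightarrow> ('a \<Rightarrow> 'b::real_normed_vector) \<Rightarrow> bool" where
  "smooth_on U f \<longleftrightarrow> open U \<and> (\<forall>n. Cn n U f)"

definition smooth_map :: "'a::euclidean_space set \<Rightarrow> ('a \<Rightarrow> 'b::real_normed_vector) \<Rightarrow> bool" where
  "smooth_map S f \<longleftrightarrow> (\<forall>x\<in>S. \<exists>U g. x \<in> U \<and> smooth_on U g \<and> (\<forall>y\<in>S \<inter> U. f y = g y))"

definition diffeomorphism_between ::
  "'a::euclidean_space set \<Rightarrow> 'b::euclidean_space set \<Rightarrow> ('a \<Rightarrow> 'b) \<Rightarrow> bool" where
  "diffeomorphism_between S T f \<longleftrightarrow>
     bij_betw f S T \<and> smooth_map S f \<and> smooth_map T (the_inv_into S f)"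

definition tangent_space :: "'a::euclidean_space set \<Rightarrow> 'a \<Rightarrow> 'a set" where
  "tangent_space S p = {v. \<exists>\<gamma> e. e > 0 \<and> \<gamma> 0 = p \<and> (\<forall>t. \<bar>t\<bar> < e \<longrightarrow> \<gamma> t \<in> S) \<and>
                              (\<gamma> has_vector_derivative v) (at 0)}"

definition Fdist :: "triangle \<Rightarrow> triangle set" where
  "Fdist w = (case w of (w1, w2, w3) \<Rightarrow>
     {a \<in> tangent_space Mtri w. case a of (a1, a2, a3) \<Rightarrow>
        det2 a1 (w3 - w2) = 0 \<and> det2 a2 (w1 - w3) = 0 \<and> det2 a3 (w2 - w1) = 0})"

definition fiber :: "triangle \<Rightarrow> triangle set" where
  "fiber w = {q \<in> Mtri. fst (Phi q) = fst (Phi w)}"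

definition transverse_at :: "'a::euclidean_space set \<Rightarrow> 'a set \<Rightarrow> 'a set \<Rightarrow> bool" where
  "transverse_at A B T \<longleftrightarrow> {x + y | x y. x \<in> A \<and> y \<in> B} = T"

end

theory Submission
  imports Defs
begin

text \<open>\<open>Phi\<close> is the restriction of a linear automorphism of \<open>\<real>\<^sup>6\<close> with inverse
  \<open>((u, v), c) \<mapsto> (c + u, c + v, c - u - v)\<close>, and twice the area of a triangle equals
  \<open>3 [u, v]\<close>; so \<open>Phi\<close> maps \<open>M\<close> onto \<open>SL(2,\<real>) \<times> \<real>\<^sup>2\<close>, and it and its inverse are smooth.
  The tangent space of \<open>M\<close> at \<open>w\<close> is the kernel of the derivative of the area, which pairs
  each velocity with the opposite side.  Moving one vertex parallel to the opposite side keeps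
  the area, so shearing the vertices one after the other realises every vector of \<open>\<F>\<close>;
  translations are tangent to the fibres of \<open>Phi\<close>.  Two sides of the triangle form a basis
  of the plane, so every tangent vector is a translation plus a vector of \<open>\<F>\<close>.\<close>

lemma det2_add_left [simp]: "det2 (x + y) z = det2 x z + det2 y z"
  and det2_add_right [simp]: "det2 z (x + y) = det2 z x + det2 z y"
  and det2_diff_left [simp]: "det2 (x - y) z = det2 x z - det2 y z"
  and det2_diff_right [simp]: "det2 z (x - y) = det2 z x - det2 z y"
  and det2_minus_left [simp]: "det2 (- x) z = - det2 x z"
  and det2_minus_right [simp]: "det2 z (- x) = - det2 z x"
  and det2_scaleR_left [simp]: "det2 (r *\<^sub>R x) z = r * det2 x z"
  and det2_scaleR_right [simp]: "det2 z (r *\<^sub>R x) = r * det2 z x"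
  and det2_self [simp]: "det2 x x = 0"
  by (simp_all add: det2_def algebra_simps)

lemma det2_commute: "det2 y x = - det2 x y"
  by (simp add: det2_def)

lemma det2_linear_system_solvable:
  assumes "det2 e1 e2 \<noteq> 0"
  shows "\<exists>d. det2 d e1 = \<alpha> \<and> det2 d e2 = \<beta>"
proof
  let ?d = "(1 / det2 e1 e2) *\<^sub>R (\<beta> *\<^sub>R e1 - \<alpha> *\<^sub>R e2)"
  show "det2 ?d e1 = \<alpha> \<and> det2 ?d e2 = \<beta>"
    using assms by (simp add: det2_commute[of e2 e1] field_simps)
qed

lemma det2_eq_0_imp_parallel:
  assumes "det2 x e = 0" "e \<noteq> 0"
  shows "\<exists>s. x = s *\<^sub>R e"
proof -
  obtain p q where e: "e = (p, q)" by fastforce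
  obtain y z where x: "x = (y, z)" by fastforce
  have "p\<^sup>2 + q\<^sup>2 \<noteq> 0"
    using assms(2) by (simp add: e sum_power2_eq_zero_iff zero_prod_def)
  moreover have "y * q = z * p"
    using assms(1) by (simp add: det2_def e x)
  ultimately have "x = ((y * p + z * q) / (p\<^sup>2 + q\<^sup>2)) *\<^sub>R e"
    by (simp add: e x field_simps power2_eq_square)
  then show ?thesis ..
qed

lemma Cn_const: "Cn n U (\<lambda>x. k)"
proof (induction n arbitrary: k)
  case 0
  then show ?case by simp
next
  case (Suc n)
  have "frechet_derivative (\<lambda>x. k) (at x) v = 0" for x v
    using frechet_derivative_at[OF has_derivative_const] by metis
  then show ?case using Suc by simp
qed

lemma Cn_bounded_linear:
  assumes "bounded_linear f"
  shows "Cn n U f"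
proof (cases n)
  case 0
  then show ?thesis using assms by (simp add: linear_continuous_on)
next
  case (Suc m)
  have f_deriv: "(f has_derivative f) (at x)" for x
    using assms by (rule bounded_linear.has_derivative[OF _ has_derivative_ident])
  then have "frechet_derivative f (at x) v = f v" for x v
    using frechet_derivative_at by metis
  moreover have "f differentiable (at x)" for x
    using f_deriv differentiable_def by blast
  ultimately show ?thesis using Suc assms by (simp add: linear_continuous_on Cn_const)
qed

lemma smooth_map_bounded_linear:
  assumes "bounded_linear g" "\<And>x. x \<in> S \<Longrightarrow> f x = g x"
  shows "smooth_map S f"
  unfolding smooth_map_def smooth_on_def
  using assms Cn_bounded_linear by (metis IntD1 UNIV_I open_UNIV)

lemma diffeomorphism_between_linear_iso:
  assumes "bounded_linear f" "bounded_linear g"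
    and "\<And>x. g (f x) = x" "\<And>y. f (g y) = y"
    and "f ` S \<subseteq> T" "g ` T \<subseteq> S"
  shows "diffeomorphism_between S T f"
  unfolding diffeomorphism_between_def
proof (intro conjI)
  show bij: "bij_betw f S T"
    using assms by (intro bij_betw_byWitness) auto
  show "smooth_map S f"
    using assms(1) by (rule smooth_map_bounded_linear) simp
  show "smooth_map T (the_inv_into S f)"
  proof (rule smooth_map_bounded_linear[OF assms(2)])
    fix y assume "y \<in> T"
    then show "the_inv_into S f y = g y"
      using assms(4,6) bij by (metis bij_betw_def image_subset_iff the_inv_into_f_eq)
  qed
qed

lemma tangent_space_mono: "S \<subseteq> S' \<Longrightarrow> tangent_space S p \<subseteq> tangent_space S' p"
  unfolding tangent_space_def by blast

lemma tangent_space_curve: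
  assumes "\<And>t. \<gamma> t \<in> S" "\<gamma> 0 = p" "(\<gamma> has_vector_derivative v) (at 0)"
  shows "v \<in> tangent_space S p"
  unfolding tangent_space_def using assms by (auto intro!: exI[of _ 1])

lemma tangent_space_subset_kernel:
  fixes f :: "'a::euclidean_space \<Rightarrow> 'b::real_normed_vector"
  assumes f_deriv: "(f has_derivative f') (at p)" and f_const: "\<And>x. x \<in> S \<Longrightarrow> f x = c"
  shows "tangent_space S p \<subseteq> {v. f' v = 0}"
proof
  fix v assume "v \<in> tangent_space S p"
  then obtain \<gamma> e where e: "e > 0" and \<gamma>0: "\<gamma> 0 = p" and \<gamma>S: "\<And>t. \<bar>t\<bar> < e \<Longrightarrow> \<gamma> t \<in> S"
    and \<gamma>_deriv: "(\<gamma> has_vector_derivative v) (at 0)"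
    unfolding tangent_space_def by blast
  have "((f \<circ> \<gamma>) has_derivative f' \<circ> (\<lambda>t. t *\<^sub>R v)) (at 0)"
    using \<gamma>_deriv f_deriv \<gamma>0 by (intro diff_chain_at) (auto simp: has_vector_derivative_def)
  moreover have "((f \<circ> \<gamma>) has_derivative (\<lambda>t. 0)) (at 0)"
  proof (rule has_derivative_transform_within_open[OF has_derivative_const open_ball])
    show "(0::real) \<in> ball 0 e" using e by simp
    show "c = (f \<circ> \<gamma>) t" if "t \<in> ball 0 e" for t
      using that \<gamma>S f_const by simp
  qed
  ultimately have "f' \<circ> (\<lambda>t. t *\<^sub>R v) = (\<lambda>t. 0)"
    by (rule has_derivative_unique)
  then have "(f' \<circ> (\<lambda>t. t *\<^sub>R v)) 1 = 0"
    by simp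
  then show "v \<in> {v. f' v = 0}"
    by simp
qed

fun twice_area :: "triangle \<Rightarrow> real" where
  "twice_area (w1, w2, w3) = det2 (w2 - w1) (w3 - w1)"

lemma mem_Mtri_iff: "w \<in> Mtri \<longleftrightarrow> twice_area w = 3"
  by (cases w rule: prod_cases3) (auto simp: Mtri_def)

definition Phi_inv :: "(pt \<times> pt) \<times> pt \<Rightarrow> triangle" where
  "Phi_inv p = (case p of ((u, v), c) \<Rightarrow> (c + u, c + v, c - u - v))"

lemma Phi_inv_Phi: "Phi_inv (Phi w) = w"
  by (auto simp: Phi_def Phi_inv_def Let_def split_beta prod_eq_iff algebra_simps)

lemma Phi_Phi_inv: "Phi (Phi_inv p) = p"
  by (auto simp: Phi_def Phi_inv_def Let_def split_beta prod_eq_iff algebra_simps)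

lemma bounded_linear_Phi: "bounded_linear Phi"
  unfolding linear_conv_bounded_linear[symmetric]
  by (rule linearI) (auto simp: Phi_def split_beta algebra_simps)

lemma bounded_linear_Phi_inv: "bounded_linear Phi_inv"
  unfolding linear_conv_bounded_linear[symmetric]
  by (rule linearI) (auto simp: Phi_inv_def split_beta algebra_simps)

lemma twice_area_Phi_inv: "twice_area (Phi_inv ((u, v), c)) = 3 * det2 u v"
  by (simp add: Phi_inv_def det2_def algebra_simps)

lemma twice_area_eq_det2_Phi: "twice_area w = 3 * det2 (fst (fst (Phi w))) (snd (fst (Phi w)))"
  by (metis Phi_inv_Phi prod.collapse twice_area_Phi_inv)

lemma Phi_mem_SL2R2_iff: "Phi w \<in> SL2R2 \<longleftrightarrow> w \<in> Mtri"
  by (simp add: SL2R2_def SL2_def mem_Mtri_iff twice_area_eq_det2_Phi mem_Times_iff case_prod_beta)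

lemma diffeomorphism_Phi: "diffeomorphism_between Mtri SL2R2 Phi"
proof (rule diffeomorphism_between_linear_iso[OF bounded_linear_Phi bounded_linear_Phi_inv])
  show "Phi ` Mtri \<subseteq> SL2R2"
    using Phi_mem_SL2R2_iff by blast
  show "Phi_inv ` SL2R2 \<subseteq> Mtri"
    using Phi_mem_SL2R2_iff[of "Phi_inv _"] by (auto simp: Phi_Phi_inv)
qed (rule Phi_inv_Phi Phi_Phi_inv)+

lemma twice_area_sigma: "twice_area (sigma w) = twice_area w"
  by (cases w) (simp add: sigma_def det2_def algebra_simps)

lemma Phi_sigma: "Phi (sigma w) = Tprod (Phi w)"
  by (simp add: sigma_def Phi_def Tprod_def Tsl_def Let_def split_beta prod_eq_iff algebra_simps)

fun side_pairing :: "triangle \<Rightarrow> triangle \<Rightarrow> real" where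
  "side_pairing (w1, w2, w3) (a1, a2, a3) = det2 a1 (w3 - w2) + det2 a2 (w1 - w3) + det2 a3 (w2 - w1)"

fun parallel_to_sides :: "triangle \<Rightarrow> triangle \<Rightarrow> bool" where
  "parallel_to_sides (w1, w2, w3) (a1, a2, a3) \<longleftrightarrow>
     det2 a1 (w3 - w2) = 0 \<and> det2 a2 (w1 - w3) = 0 \<and> det2 a3 (w2 - w1) = 0"

lemma Fdist_eq: "Fdist w = {a \<in> tangent_space Mtri w. parallel_to_sides w a}"
proof -
  obtain w1 w2 w3 where w: "w = (w1, w2, w3)"
    by (cases w rule: prod_cases3)
  have "parallel_to_sides w a = (case a of (a1, a2, a3) \<Rightarrow>
          det2 a1 (w3 - w2) = 0 \<and> det2 a2 (w1 - w3) = 0 \<and> det2 a3 (w2 - w1) = 0)" for a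
    by (cases a rule: prod_cases3) (simp add: w)
  then show ?thesis
    by (simp add: Fdist_def w)
qed

lemma side_pairing_add: "side_pairing w (a + b) = side_pairing w a + side_pairing w b"
  by (cases w rule: prod_cases3, cases a rule: prod_cases3, cases b rule: prod_cases3) simp

lemma side_pairing_parallel: "parallel_to_sides w a \<Longrightarrow> side_pairing w a = 0"
  by (cases w rule: prod_cases3, cases a rule: prod_cases3) simp

lemma has_derivative_twice_area: "(twice_area has_derivative (\<lambda>a. - side_pairing w a)) (at w)"
proof -
  have twice_area_eq: "twice_area = (\<lambda>w. det2 (fst (snd w) - fst w) (snd (snd w) - fst w))"
    by (auto simp: fun_eq_iff)
  obtain w1 w2 w3 where "w = (w1, w2, w3)"
    by (cases w rule: prod_cases3)
  then show ?thesis
    unfolding twice_area_eq det2_def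
    by (auto intro!: derivative_eq_intros simp: fun_eq_iff det2_def algebra_simps)
qed

lemma twice_area_move_vertex:
  "twice_area (w1 + x, w2, w3) = twice_area (w1, w2, w3) - det2 x (w3 - w2)"
  "twice_area (w1, w2 + x, w3) = twice_area (w1, w2, w3) - det2 x (w1 - w3)"
  "twice_area (w1, w2, w3 + x) = twice_area (w1, w2, w3) - det2 x (w2 - w1)"
  by (simp_all add: det2_def algebra_simps)

lemma twice_area_translate: "twice_area (w1 + d, w2 + d, w3 + d) = twice_area (w1, w2, w3)"
  by simp

lemma Mtri_sides_det2:
  assumes "(w1, w2, w3) \<in> Mtri"
  shows "det2 (w3 - w2) (w1 - w3) = 3"
  using assms by (simp add: mem_Mtri_iff det2_def algebra_simps)

lemma translation_plus_parallel_tangent: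
  assumes w: "(w1, w2, w3) \<in> Mtri" and parallel: "parallel_to_sides (w1, w2, w3) (b1, b2, b3)"
  shows "(d, d, d) + (b1, b2, b3) \<in> tangent_space Mtri (w1, w2, w3)"
proof -
  have "w1 - w3 \<noteq> 0" "w2 - w1 \<noteq> 0"
    using w Mtri_sides_det2[OF w] by (auto simp: mem_Mtri_iff)
  then obtain s2 s3 where b2: "b2 = s2 *\<^sub>R (w1 - w3)" and b3: "b3 = s3 *\<^sub>R (w2 - w1)"
    using parallel det2_eq_0_imp_parallel by (metis parallel_to_sides.simps)
  \<comment> \<open>Each vertex in turn moves parallel to its opposite side in the triangle already moved.\<close>
  define p1 where "p1 t = w1 + t *\<^sub>R b1" for t :: real
  define p2 where "p2 t = w2 + t *\<^sub>R (s2 *\<^sub>R (p1 t - w3))" for t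
  define p3 where "p3 t = w3 + t *\<^sub>R (s3 *\<^sub>R (p2 t - p1 t))" for t
  define \<gamma> where "\<gamma> t = (p1 t + t *\<^sub>R d, p2 t + t *\<^sub>R d, p3 t + t *\<^sub>R d)" for t
  have "twice_area (\<gamma> t) = twice_area (w1, w2, w3)" for t
  proof -
    have "twice_area (\<gamma> t) = twice_area (p1 t, p2 t, p3 t)"
      unfolding \<gamma>_def by (rule twice_area_translate)
    also have "\<dots> = twice_area (p1 t, p2 t, w3)"
      unfolding p3_def twice_area_move_vertex det2_scaleR_left det2_self by simp
    also have "\<dots> = twice_area (p1 t, w2, w3)"
      unfolding p2_def twice_area_move_vertex det2_scaleR_left det2_self by simp
    also have "\<dots> = twice_area (w1, w2, w3)"
      unfolding p1_def twice_area_move_vertex using parallel by simp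
    finally show ?thesis .
  qed
  then have "\<gamma> t \<in> Mtri" for t
    using w by (simp add: mem_Mtri_iff)
  moreover have "\<gamma> 0 = (w1, w2, w3)"
    by (simp add: \<gamma>_def p1_def p2_def p3_def)
  moreover have "(\<gamma> has_vector_derivative (d, d, d) + (b1, b2, b3)) (at 0)"
    unfolding has_vector_derivative_def \<gamma>_def p1_def p2_def p3_def b2 b3
    by (auto intro!: derivative_eq_intros simp: fun_eq_iff algebra_simps)
  ultimately show ?thesis
    by (rule tangent_space_curve)
qed

lemma side_pairing_eq_0_decompose:
  assumes w: "w \<in> Mtri" and a: "side_pairing w a = 0"
  shows "\<exists>d b. a = (d, d, d) + b \<and> parallel_to_sides w b"
proof -
  obtain w1 w2 w3 where w_eq: "w = (w1, w2, w3)"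
    by (cases w rule: prod_cases3)
  obtain a1 a2 a3 where a_eq: "a = (a1, a2, a3)"
    by (cases a rule: prod_cases3)
  obtain d where d: "det2 d (w3 - w2) = det2 a1 (w3 - w2)" "det2 d (w1 - w3) = det2 a2 (w1 - w3)"
    using det2_linear_system_solvable Mtri_sides_det2 w unfolding w_eq by (metis zero_neq_numeral)
  have "det2 d (w2 - w1) = det2 a3 (w2 - w1)"
    using d a unfolding w_eq a_eq by (simp add: det2_def algebra_simps)
  then have "a = (d, d, d) + (a1 - d, a2 - d, a3 - d) \<and> parallel_to_sides w (a1 - d, a2 - d, a3 - d)"
    using d by (simp add: w_eq a_eq)
  then show ?thesis by blast
qed

lemma tangent_space_Mtri:
  assumes "w \<in> Mtri"
  shows "tangent_space Mtri w = {a. side_pairing w a = 0}"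
proof
  show "tangent_space Mtri w \<subseteq> {a. side_pairing w a = 0}"
    using tangent_space_subset_kernel[OF has_derivative_twice_area, of Mtri 3]
    by (auto simp: mem_Mtri_iff)
  show "{a. side_pairing w a = 0} \<subseteq> tangent_space Mtri w"
  proof
    fix a assume "a \<in> {a. side_pairing w a = 0}"
    then obtain d b where "a = (d, d, d) + b" "parallel_to_sides w b"
      using side_pairing_eq_0_decompose assms by blast
    then show "a \<in> tangent_space Mtri w"
      using translation_plus_parallel_tangent assms
      by (metis prod_cases3)
  qed
qed

lemma translation_tangent_fiber:
  assumes "w \<in> Mtri"
  shows "(d, d, d) \<in> tangent_space (fiber w) w"
proof (rule tangent_space_curve)
  let ?\<gamma> = "\<lambda>t. w + t *\<^sub>R (d, d, d)"
  have "Phi (d, d, d) = ((0, 0), d)"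
    by (simp add: Phi_def Let_def algebra_simps flip: scaleR_add_left)
  then have "Phi (?\<gamma> t) = Phi w + t *\<^sub>R ((0, 0), d)" for t
    by (simp only: linear_add[OF bounded_linear.linear[OF bounded_linear_Phi]] linear_scale[OF bounded_linear.linear[OF bounded_linear_Phi]])
  then have "fst (Phi (?\<gamma> t)) = fst (Phi w)" for t
    by (simp add: zero_prod_def)
  moreover have "?\<gamma> t \<in> Mtri" for t
    using assms by (cases w rule: prod_cases3) (simp add: mem_Mtri_iff)
  ultimately show "?\<gamma> t \<in> fiber w" for t
    by (simp add: fiber_def)
  show "?\<gamma> 0 = w"
    by (simp only: scaleR_zero_left add_0_right)
  have "((\<lambda>t. w + t *\<^sub>R v) has_vector_derivative v) (at 0)" for v :: triangle
    by (auto intro!: derivative_eq_intros)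
  then show "(?\<gamma> has_vector_derivative (d, d, d)) (at 0)" .
qed

lemma transverse_fiber_Fdist:
  assumes w: "w \<in> Mtri"
  shows "transverse_at (tangent_space (fiber w) w) (Fdist w) (tangent_space Mtri w)"
  unfolding transverse_at_def
proof (intro equalityI subsetI)
  fix z assume "z \<in> {x + y |x y. x \<in> tangent_space (fiber w) w \<and> y \<in> Fdist w}"
  then obtain x y where z: "z = x + y"
    and x: "x \<in> tangent_space (fiber w) w" and y: "y \<in> Fdist w"
    by blast
  have "tangent_space (fiber w) w \<subseteq> tangent_space Mtri w"
    by (rule tangent_space_mono) (auto simp: fiber_def)
  then show "z \<in> tangent_space Mtri w"
    using x y unfolding z Fdist_eq tangent_space_Mtri[OF w] by (auto simp: side_pairing_add)
next
  fix a assume "a \<in> tangent_space Mtri w"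
  then obtain d b where a: "a = (d, d, d) + b" and b: "parallel_to_sides w b"
    using side_pairing_eq_0_decompose w unfolding tangent_space_Mtri[OF w] by blast
  have "b \<in> Fdist w"
    using b side_pairing_parallel by (simp add: Fdist_eq tangent_space_Mtri[OF w])
  then show "a \<in> {x + y |x y. x \<in> tangent_space (fiber w) w \<and> y \<in> Fdist w}"
    using a translation_tangent_fiber[OF w] by blast
qed

theorem lemma4p2:
  shows "(\<forall>w\<in>Mtri. det2 (fst (fst (Phi w))) (snd (fst (Phi w))) = 1)
    \<and> diffeomorphism_between Mtri SL2R2 Phi
    \<and> (\<forall>w\<in>Mtri. sigma w \<in> Mtri \<and> Phi (sigma w) = Tprod (Phi w))
    \<and> (\<forall>w\<in>Mtri. transverse_at (tangent_space (fiber w) w) (Fdist w) (tangent_space Mtri w))"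
proof (intro conjI ballI)
  show "det2 (fst (fst (Phi w))) (snd (fst (Phi w))) = 1" if "w \<in> Mtri" for w
    using that twice_area_eq_det2_Phi by (simp add: mem_Mtri_iff)
  show "sigma w \<in> Mtri" if "w \<in> Mtri" for w
    using that twice_area_sigma by (simp add: mem_Mtri_iff)
qed (simp_all add: diffeomorphism_Phi Phi_sigma transverse_fiber_Fdist)

end
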